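(* Let $\mathcal{M}\subseteq\mathcal{M}_1$ and $\mathbb{P}\in\mathcal{M}$. Let $\alpha$ be of the form $\alpha(Q)=\widetilde\alpha(Q)$ for $Q\in\mathcal{Q}^{\mathbb{P}}$, $\alpha(Q)=+\infty$ for $Q\in\mathcal{M}_1\setminus\mathcal{Q}^{\mathbb{P}}$, where $\mathcal{Q}^{\mathbb{P}}$ is a weak-$*$-closed subset of $\mathcal{P}^{\mathbb{P}}$, $\widetilde\alpha<\infty$ on $\mathcal{Q}^{\mathbb{P}}$ and $\inf_{\mathcal{Q}^{\mathbb{P}}}\widetilde\alpha>-\infty$. Then for all $X\in\mathcal{X}^{\mathcal{M}}\cap L^\infty(\mathbb{P})$, $\widehat\rho^{\mathcal{M}}(X)=\widehat\rho^{\mathbb{P}}(X)=\rho^{\mathbb{P}}(X)=\rho^{\mathcal{M}}(X)$.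
   Context: $(\Omega,\mathcal{F})$ is a measurable space, $\mathcal{M}_1$ the set of probability measures on it with the topology of weak (weak-$*$) convergence, $\mathcal{X}$ the space of pointwise bounded $\mathcal{F}$-measurable real functions, $L^\infty(P)=L^\infty(\Omega,\mathcal{F},P)$, $\mathcal{P}^P=\{Q\in\mathcal{M}_1:Q\ll P\}$. With $\alpha$ as in the claim, $\rho(X)=\sup_{Q\in\mathcal{M}_1}\{\mathbb{E}_Q[-X]-\alpha(Q)\}$ on $\mathcal{X}$ (assumed real-valued). For $P\in\mathcal{M}_1$, $X\in L^\infty(P)$: $\rho^P(X)=\inf_{\{\widetilde X\in\mathcal{X}:P(\widetilde X=X)=1\}}\rho(\widetilde X)$ and $\widehat\rho^P(X)=\sup_{Q\in\mathcal{P}^P}\{\mathbb{E}_Q[-X]-\alpha(Q)\}$. $\mathcal{X}^{\mathcal{M}}=\bigcap_{P\in\mathcal{M}}L^\infty(P)$, $\rho^{\mathcal{M}}(X)=\sup_{P\in\mathcal{M}}\rho^P(X)$ and $\widehat\rho^{\mathcal{M}}(X)=\sup_{P\in\mathcal{M}}\widehat\rho^P(X)$. *)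

theory Defs
  imports "HOL-Probability.Probability"
begin

text \<open>The measurable space (Omega, F) is represented by a measure M; only
  space M and sets M are used.\<close>

definition M1 :: "'a measure \<Rightarrow> 'a measure set" where
  "M1 M = {Q. prob_space Q \<and> sets Q = sets M}"

definition bddX :: "'a measure \<Rightarrow> ('a \<Rightarrow> real) set" where
  "bddX M = {X. X \<in> borel_measurable M \<and> (\<exists>C. \<forall>\<omega>\<in>space M. \<bar>X \<omega>\<bar> \<le> C)}"

definition Linf :: "'a measure \<Rightarrow> ('a \<Rightarrow> real) set" where
  "Linf P = {X. X \<in> borel_measurable P \<and> (\<exists>C. AE \<omega> in P. \<bar>X \<omega>\<bar> \<le> C)}"

definition weak_star_topology :: "'a measure \<Rightarrow> 'a measure topology" where
  "weak_star_topology M = topology_generated_by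
     {{Q \<in> M1 M. (\<integral>\<omega>. X \<omega> \<partial>Q) \<in> U} | X U. X \<in> bddX M \<and> open U}"

definition PP :: "'a measure \<Rightarrow> 'a measure \<Rightarrow> 'a measure set" where
  "PP M P = {Q \<in> M1 M. absolutely_continuous P Q}"

definition rho :: "'a measure \<Rightarrow> ('a measure \<Rightarrow> ereal) \<Rightarrow> ('a \<Rightarrow> real) \<Rightarrow> ereal" where
  "rho M \<alpha> X = (SUP Q\<in>M1 M. ereal (\<integral>\<omega>. - X \<omega> \<partial>Q) - \<alpha> Q)"

definition rhoP :: "'a measure \<Rightarrow> ('a measure \<Rightarrow> ereal) \<Rightarrow> 'a measure \<Rightarrow> ('a \<Rightarrow> real) \<Rightarrow> ereal" where
  "rhoP M \<alpha> P X = (INF Xt\<in>{Xt \<in> bddX M. AE \<omega> in P. Xt \<omega> = X \<omega>}. rho M \<alpha> Xt)"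

definition rhohatP :: "'a measure \<Rightarrow> ('a measure \<Rightarrow> ereal) \<Rightarrow> 'a measure \<Rightarrow> ('a \<Rightarrow> real) \<Rightarrow> ereal" where
  "rhohatP M \<alpha> P X = (SUP Q\<in>PP M P. ereal (\<integral>\<omega>. - X \<omega> \<partial>Q) - \<alpha> Q)"

definition XM :: "'a measure set \<Rightarrow> ('a \<Rightarrow> real) set" where
  "XM Ms = {X. \<forall>P\<in>Ms. X \<in> Linf P}"

definition rhoM :: "'a measure \<Rightarrow> ('a measure \<Rightarrow> ereal) \<Rightarrow> 'a measure set \<Rightarrow> ('a \<Rightarrow> real) \<Rightarrow> ereal" where
  "rhoM M \<alpha> Ms X = (SUP P\<in>Ms. rhoP M \<alpha> P X)"

definition rhohatM :: "'a measure \<Rightarrow> ('a measure \<Rightarrow> ereal) \<Rightarrow> 'a measure set \<Rightarrow> ('a \<Rightarrow> real) \<Rightarrow> ereal" where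
  "rhohatM M \<alpha> Ms X = (SUP P\<in>Ms. rhohatP M \<alpha> P X)"

end

theory Submission
  imports Defs
begin

text \<open>Since \<alpha> is infinite off QP and every Q in QP is absolutely continuous with respect to P,
  each of the four suprema reduces to the supremum of E_Q[-X] - \<alpha> Q over Q in QP, and this
  supremum does not see changes of X on P-null sets. For the robust representations, truncating X
  at a common essential bound for P and P' gives a bounded representative of X under both.\<close>

lemma SUP_eq_attained:
  fixes f :: "'b \<Rightarrow> 'c::complete_lattice"
  assumes "x \<in> A" "\<And>y. y \<in> A \<Longrightarrow> f y \<le> f x"
  shows "(SUP y\<in>A. f y) = f x"
  using assms by (intro antisym SUP_least SUP_upper)

lemma SUP_minus_infinite_outside_le:
  fixes f :: "'b \<Rightarrow> real" and \<alpha> :: "'b \<Rightarrow> ereal"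
  assumes "\<And>Q. Q \<in> S - T \<Longrightarrow> \<alpha> Q = \<infinity>"
  shows "(SUP Q\<in>S. ereal (f Q) - \<alpha> Q) \<le> (SUP Q\<in>T. ereal (f Q) - \<alpha> Q)"
proof (rule SUP_least)
  fix Q assume "Q \<in> S"
  then show "ereal (f Q) - \<alpha> Q \<le> (SUP Q\<in>T. ereal (f Q) - \<alpha> Q)"
    using assms by (cases "Q \<in> T") (auto intro: SUP_upper)
qed

lemma SUP_minus_infinite_outside_eq:
  fixes f :: "'b \<Rightarrow> real" and \<alpha> :: "'b \<Rightarrow> ereal"
  assumes "T \<subseteq> S" and "\<And>Q. Q \<in> S - T \<Longrightarrow> \<alpha> Q = \<infinity>"
  shows "(SUP Q\<in>S. ereal (f Q) - \<alpha> Q) = (SUP Q\<in>T. ereal (f Q) - \<alpha> Q)"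
  using SUP_minus_infinite_outside_le[OF assms(2)] SUP_subset_mono[OF assms(1) order_refl]
  by (rule antisym)

lemma integral_cong_AE_absolutely_continuous:
  fixes X Y :: "'a \<Rightarrow> real"
  assumes "absolutely_continuous P Q" "sets Q = sets P"
    and "AE \<omega> in P. Y \<omega> = X \<omega>"
    and "X \<in> borel_measurable P" "Y \<in> borel_measurable P"
  shows "(\<integral>\<omega>. Y \<omega> \<partial>Q) = (\<integral>\<omega>. X \<omega> \<partial>Q)"
proof (rule integral_cong_AE)
  show "AE \<omega> in Q. Y \<omega> = X \<omega>"
    using absolutely_continuous_AE[OF assms(2,1,3)] .
qed (use assms(2,4,5) measurable_cong_sets in auto)

lemma bounded_representative_two_measures:
  fixes X :: "'a \<Rightarrow> real"
  assumes "X \<in> Linf P" "X \<in> Linf P'" "sets P = sets M"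
  obtains Y where "Y \<in> bddX M" "AE \<omega> in P. Y \<omega> = X \<omega>" "AE \<omega> in P'. Y \<omega> = X \<omega>"
proof -
  obtain C1 C2 where X_meas: "X \<in> borel_measurable M"
    and C1: "AE \<omega> in P. \<bar>X \<omega>\<bar> \<le> C1" and C2: "AE \<omega> in P'. \<bar>X \<omega>\<bar> \<le> C2"
    using assms measurable_cong_sets by (auto simp: Linf_def)
  define C where "C = max C1 C2"
  define Y where "Y = (\<lambda>\<omega>. if \<bar>X \<omega>\<bar> \<le> C then X \<omega> else 0)"
  have "Y \<in> borel_measurable M"
    unfolding Y_def using X_meas by measurable
  moreover have "\<forall>\<omega>\<in>space M. \<bar>Y \<omega>\<bar> \<le> \<bar>C\<bar>"
    by (auto simp: Y_def)
  ultimately have "Y \<in> bddX M"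
    by (auto simp: bddX_def)
  moreover have "AE \<omega> in P. Y \<omega> = X \<omega>"
    using C1 by eventually_elim (auto simp: Y_def C_def)
  moreover have "AE \<omega> in P'. Y \<omega> = X \<omega>"
    using C2 by eventually_elim (auto simp: Y_def C_def)
  ultimately show ?thesis
    using that by blast
qed

locale penalty_concentrated_on =
  fixes M :: "'a measure" and \<alpha> :: "'a measure \<Rightarrow> ereal"
    and P :: "'a measure" and QP :: "'a measure set"
  assumes P_in_M1: "P \<in> M1 M"
    and QP_sub: "QP \<subseteq> PP M P"
    and alpha_out: "\<And>Q. Q \<in> M1 M - QP \<Longrightarrow> \<alpha> Q = \<infinity>"
begin

definition rho_QP :: "('a \<Rightarrow> real) \<Rightarrow> ereal" where
  "rho_QP X = (SUP Q\<in>QP. ereal (\<integral>\<omega>. - X \<omega> \<partial>Q) - \<alpha> Q)"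

lemma sets_P: "sets P = sets M"
  using P_in_M1 by (simp add: M1_def)

lemma QP_sub_M1: "QP \<subseteq> M1 M"
  using QP_sub by (auto simp: PP_def)

lemma rho_QP_cong_AE:
  assumes "AE \<omega> in P. Y \<omega> = X \<omega>"
    and "X \<in> borel_measurable M" "Y \<in> borel_measurable M"
  shows "rho_QP Y = rho_QP X"
  unfolding rho_QP_def
proof (rule SUP_cong)
  fix Q assume "Q \<in> QP"
  then have "absolutely_continuous P Q" "sets Q = sets P"
    using QP_sub sets_P by (auto simp: PP_def M1_def)
  then have "(\<integral>\<omega>. - Y \<omega> \<partial>Q) = (\<integral>\<omega>. - X \<omega> \<partial>Q)"
    using assms sets_P measurable_cong_sets
    by (intro integral_cong_AE_absolutely_continuous[of P Q]) auto
  then show "ereal (\<integral>\<omega>. - Y \<omega> \<partial>Q) - \<alpha> Q = ereal (\<integral>\<omega>. - X \<omega> \<partial>Q) - \<alpha> Q"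
    by simp
qed simp

lemma rho_eq_rho_QP: "rho M \<alpha> Y = rho_QP Y"
  unfolding rho_def rho_QP_def
  using QP_sub_M1 alpha_out by (rule SUP_minus_infinite_outside_eq)

lemma rhohatP_eq_rho_QP: "rhohatP M \<alpha> P X = rho_QP X"
  unfolding rhohatP_def rho_QP_def
  using QP_sub alpha_out by (intro SUP_minus_infinite_outside_eq) (auto simp: PP_def)

lemma rhohatP_le_rho_QP: "rhohatP M \<alpha> P' X \<le> rho_QP X"
  unfolding rhohatP_def rho_QP_def
  using alpha_out by (intro SUP_minus_infinite_outside_le) (auto simp: PP_def)

lemma rhoP_le_rho_QP:
  assumes "Y \<in> bddX M" "AE \<omega> in P. Y \<omega> = X \<omega>" "AE \<omega> in P'. Y \<omega> = X \<omega>"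
    and "X \<in> borel_measurable M"
  shows "rhoP M \<alpha> P' X \<le> rho_QP X"
proof -
  have "rhoP M \<alpha> P' X \<le> rho M \<alpha> Y"
    unfolding rhoP_def using assms(1,3) by (auto intro: INF_lower)
  also have "\<dots> = rho_QP X"
    using assms rho_QP_cong_AE by (simp add: rho_eq_rho_QP bddX_def)
  finally show ?thesis .
qed

lemma rho_QP_le_rhoP:
  assumes "X \<in> borel_measurable M"
  shows "rho_QP X \<le> rhoP M \<alpha> P X"
  unfolding rhoP_def
proof (rule INF_greatest)
  fix Y assume "Y \<in> {Y \<in> bddX M. AE \<omega> in P. Y \<omega> = X \<omega>}"
  then show "rho_QP X \<le> rho M \<alpha> Y"
    using assms rho_QP_cong_AE[of Y X] by (simp add: rho_eq_rho_QP bddX_def)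
qed

end

theorem corollary5p10:
  fixes M :: "'a measure" and Ms :: "'a measure set" and P :: "'a measure"
    and \<alpha> \<alpha>t :: "'a measure \<Rightarrow> ereal" and QP :: "'a measure set"
    and X :: "'a \<Rightarrow> real"
  assumes Ms_sub: "Ms \<subseteq> M1 M"
    and P_in: "P \<in> Ms"
    and QP_sub: "QP \<subseteq> PP M P"
    and QP_closed: "closedin (weak_star_topology M) QP"
    and alpha_in: "\<And>Q. Q \<in> QP \<Longrightarrow> \<alpha> Q = \<alpha>t Q"
    and alpha_out: "\<And>Q. Q \<in> M1 M - QP \<Longrightarrow> \<alpha> Q = \<infinity>"
    and alphat_fin: "\<And>Q. Q \<in> QP \<Longrightarrow> \<alpha>t Q < \<infinity>"
    and alphat_inf: "(INF Q\<in>QP. \<alpha>t Q) > - \<infinity>"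
    and rho_real: "\<And>Y. Y \<in> bddX M \<Longrightarrow> \<bar>rho M \<alpha> Y\<bar> < \<infinity>"
    and X_in: "X \<in> XM Ms \<inter> Linf P"
  shows "rhohatM M \<alpha> Ms X = rhohatP M \<alpha> P X
       \<and> rhohatP M \<alpha> P X = rhoP M \<alpha> P X
       \<and> rhoP M \<alpha> P X = rhoM M \<alpha> Ms X"
proof -
  interpret penalty_concentrated_on M \<alpha> P QP
    using Ms_sub P_in QP_sub alpha_out by unfold_locales auto
  have X_meas: "X \<in> borel_measurable M"
    using X_in sets_P measurable_cong_sets by (auto simp: Linf_def)
  have rhoP_le: "rhoP M \<alpha> P' X \<le> rho_QP X" if "P' \<in> Ms" for P'
  proof -
    have "X \<in> Linf P'"
      using X_in that by (auto simp: XM_def)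
    then obtain Y where "Y \<in> bddX M" "AE \<omega> in P. Y \<omega> = X \<omega>" "AE \<omega> in P'. Y \<omega> = X \<omega>"
      using X_in sets_P by (auto elim: bounded_representative_two_measures)
    then show ?thesis
      using X_meas by (rule rhoP_le_rho_QP)
  qed
  have rhoP: "rhoP M \<alpha> P X = rho_QP X"
    using rhoP_le[OF P_in] rho_QP_le_rhoP[OF X_meas] by (rule antisym)
  have "rhohatM M \<alpha> Ms X = rhohatP M \<alpha> P X"
    unfolding rhohatM_def
    using P_in rhohatP_le_rho_QP by (simp add: SUP_eq_attained rhohatP_eq_rho_QP)
  moreover have "rhoM M \<alpha> Ms X = rhoP M \<alpha> P X"
    unfolding rhoM_def
    using P_in rhoP_le by (simp add: SUP_eq_attained rhoP)
  ultimately show ?thesis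
    using rhohatP_eq_rho_QP rhoP by simp
qed

end
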